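(* Let $W$ be a $DNNF$-compilation of a weighted base, i.e. $W=\{\langle\alpha,+\infty\rangle\}\cup\{\langle{\it holds}_i,k_i\rangle \mid i\in I\}$ where the $k_i$ are finite positive weights, and suppose the single hard constraint $\alpha$ is a smooth $DNNF$ sentence. Define $k$ and $min$ on the nodes of $\alpha$ inductively: $k(true)=0$, $k(false)=+\infty$; for a literal $\ell$, $k(\ell)=k_i$ if $\ell=\neg{\it holds}_i$ with $\langle{\it holds}_i,k_i\rangle\in W$, and $k(\ell)=0$ otherwise; $k(\bigvee_j\alpha_j)=\min_j k(\alpha_j)$; $k(\bigwedge_j\alpha_j)=\sum_j k(\alpha_j)$. Further $min(\beta)=\beta$ for a literal or constant $\beta$; $min(\beta=\bigvee_j\beta_j)=\bigvee_{j:\,k(\beta_j)=k(\beta)} min(\beta_j)$; $min(\bigwedge_j\beta_j)=\bigwedge_j min(\beta_j)$. Then $min(\alpha)$ is a smooth $DNNF$ sentence and is a minimization of $W$, i.e. its models are exactly $min_W(\Omega)$.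
   Context: Worlds are $\omega\in\Omega=2^{PS}$ for a finite symbol set $PS$. For a weighted base $W$ (finite set of pairs $\langle\phi,k\rangle$, $k$ a positive integer or $+\infty$), $K_W(\omega)=\sum_{\langle\phi_i,k_i\rangle\in W,\ \omega\models\neg\phi_i}k_i$ and $min_W(\Omega)=\{\omega\in\Omega \mid K_W(\omega)\le K_W(\omega')\ \forall\omega'\in\Omega\}$. A minimization of $W$ is a formula whose set of models is $min_W(\Omega)$. A $DNNF$ sentence is a rooted DAG whose leaves are labeled $true$, $false$, $x$ or $\neg x$ ($x\in PS$), whose internal nodes are labeled $\wedge$ or $\vee$ with arbitrarily many children, and such that the children of every $\wedge$-node mention pairwise disjoint sets of variables (decomposability). It is smooth if for each $\vee$-node all children mention the same set of variables. A $DNNF$-compilation of a weighted base is obtained by taking its normal form (each soft formula $\langle\phi_i,k_i\rangle$ replaced by hard $\langle{\it holds}_i\Rightarrow\phi_i,+\infty\rangle$ and soft $\langle{\it holds}_i,k_i\rangle$ with fresh ${\it holds}_i$), conjoining all hard constraints into one, and replacing it by an equivalent $DNNF$ sentence, keeping the soft constraints $\langle{\it holds}_i,k_i\rangle$.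
   Formalization: The hard constraint alpha is also assumed satisfiable and to mention every symbol $holds_i$ with $i \in I$. The statement above fails without it. *)

theory Defs
  imports Main "HOL-Library.Extended_Nat"
begin

datatype 'v nnf = TT | FF | Pos 'v | Neg 'v | Or "'v nnf list" | And "'v nnf list"

fun sat :: "('v \<Rightarrow> bool) \<Rightarrow> 'v nnf \<Rightarrow> bool" where
  "sat w TT = True"
| "sat w FF = False"
| "sat w (Pos x) = w x"
| "sat w (Neg x) = (\<not> w x)"
| "sat w (Or xs) = (\<exists>b\<in>set xs. sat w b)"
| "sat w (And xs) = (\<forall>b\<in>set xs. sat w b)"

fun vars :: "'v nnf \<Rightarrow> 'v set" where
  "vars TT = {}"
| "vars FF = {}"
| "vars (Pos x) = {x}"
| "vars (Neg x) = {x}"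
| "vars (Or xs) = (\<Union>b\<in>set xs. vars b)"
| "vars (And xs) = (\<Union>b\<in>set xs. vars b)"

fun decomposable :: "'v nnf \<Rightarrow> bool" where
  "decomposable (Or xs) = (\<forall>b\<in>set xs. decomposable b)"
| "decomposable (And xs) = ((\<forall>b\<in>set xs. decomposable b) \<and>
     (\<forall>i j. i < length xs \<longrightarrow> j < length xs \<longrightarrow> i \<noteq> j \<longrightarrow> vars (xs!i) \<inter> vars (xs!j) = {}))"
| "decomposable _ = True"

fun smooth :: "'v nnf \<Rightarrow> bool" where
  "smooth (Or xs) = ((\<forall>b\<in>set xs. smooth b) \<and> (\<forall>a\<in>set xs. \<forall>b\<in>set xs. vars a = vars b))"
| "smooth (And xs) = (\<forall>b\<in>set xs. smooth b)"
| "smooth _ = True"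

(* Soft constraints <holds_i, k_i>, i in I, with holds_i = h i a variable.
   kval = the node function k of the paper (values in enat, \<infinity> = +infinity). *)
fun kval :: "'i set \<Rightarrow> ('i \<Rightarrow> 'v) \<Rightarrow> ('i \<Rightarrow> nat) \<Rightarrow> 'v nnf \<Rightarrow> enat" where
  "kval I h k TT = 0"
| "kval I h k FF = \<infinity>"
| "kval I h k (Pos x) = 0"
| "kval I h k (Neg x) = (if x \<in> h ` I then enat (k (the_inv_into I h x)) else 0)"
| "kval I h k (Or xs) = Min (insert \<infinity> (set (map (kval I h k) xs)))"
| "kval I h k (And xs) = sum_list (map (kval I h k) xs)"

function minf :: "'i set \<Rightarrow> ('i \<Rightarrow> 'v) \<Rightarrow> ('i \<Rightarrow> nat) \<Rightarrow> 'v nnf \<Rightarrow> 'v nnf" where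
  "minf I h k TT = TT"
| "minf I h k FF = FF"
| "minf I h k (Pos x) = Pos x"
| "minf I h k (Neg x) = Neg x"
| "minf I h k (Or xs) =
     Or (map (minf I h k) (filter (\<lambda>b. kval I h k b = kval I h k (Or xs)) xs))"
| "minf I h k (And xs) = And (map (minf I h k) xs)"
  by pat_completeness auto
termination
  by (relation "measure (\<lambda>(_,_,_,b). size b)")
     (auto simp: size_list_estimation' less_Suc_eq_le)

definition KW :: "'v nnf \<Rightarrow> 'i set \<Rightarrow> ('i \<Rightarrow> 'v) \<Rightarrow> ('i \<Rightarrow> nat) \<Rightarrow> ('v \<Rightarrow> bool) \<Rightarrow> enat" where
  "KW \<alpha> I h k w = (if sat w \<alpha> then 0 else \<infinity>) + (\<Sum>i\<in>{i\<in>I. \<not> w (h i)}. enat (k i))"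

definition minW :: "'v nnf \<Rightarrow> 'i set \<Rightarrow> ('i \<Rightarrow> 'v) \<Rightarrow> ('i \<Rightarrow> nat) \<Rightarrow> ('v \<Rightarrow> bool) set" where
  "minW \<alpha> I h k = {w. \<forall>w'. KW \<alpha> I h k w \<le> KW \<alpha> I h k w'}"

end

theory Submission
  imports Defs
begin

text \<open>
  Write \<open>cost\<^sub>V(w)\<close> for the total weight of the soft constraints \<open>holds\<^sub>i \<in> V\<close>
  falsified by \<open>w\<close>. For decomposable \<open>\<beta>\<close>, \<open>k(\<beta>)\<close> is the least value of
  \<open>cost\<^bsub>vars \<beta>\<^esub>\<close> over the models of \<open>\<beta>\<close>; if \<open>\<beta>\<close> is also smooth, the models of
  \<open>min(\<beta>)\<close> are exactly the models of \<open>\<beta>\<close> attaining it. Both follow by induction: the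
  children of an \<open>\<and>\<close>-node share no variables, so their costs add up and their minimal
  models can be glued together; smoothness makes the children of an \<open>\<or>\<close>-node measure
  cost over the same variables, and \<open>min\<close> keeps exactly the children attaining the
  minimum. As \<open>\<alpha>\<close> mentions every \<open>holds\<^sub>i\<close>, \<open>K\<^sub>W(w)\<close> is \<open>cost\<^bsub>vars \<alpha>\<^esub>(w)\<close> on
  models of \<open>\<alpha>\<close> and infinite elsewhere, so the minimal worlds are the minimal-cost
  models of \<open>\<alpha>\<close>.
\<close>

lemma nnf_induct_And_Cons [case_names TT FF Pos Neg Or And_Nil And_Cons]:
  assumes "P TT" "P FF" "\<And>x. P (Pos x)" "\<And>x. P (Neg x)"
    and "\<And>xs. (\<And>b. b \<in> set xs \<Longrightarrow> P b) \<Longrightarrow> P (Or xs)"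
    and "P (And [])" "\<And>b bs. P b \<Longrightarrow> P (And bs) \<Longrightarrow> P (And (b # bs))"
  shows "P \<beta>"
proof (induction \<beta>)
  case (And xs)
  then show ?case by (induction xs) (auto intro: assms)
qed (auto intro: assms)

lemma decomposable_And:
  "decomposable (And xs) \<longleftrightarrow>
     (\<forall>b\<in>set xs. decomposable b) \<and> sorted_wrt (\<lambda>b c. vars b \<inter> vars c = {}) xs"
proof -
  let ?D = "\<lambda>i j. vars (xs ! i) \<inter> vars (xs ! j) = {}"
  have "(\<forall>i j. i < length xs \<longrightarrow> j < length xs \<longrightarrow> i \<noteq> j \<longrightarrow> ?D i j) \<longleftrightarrow>
      (\<forall>i j. i < j \<longrightarrow> j < length xs \<longrightarrow> ?D i j)"
  proof (intro iffI allI impI)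
    fix i j
    assume "\<forall>i j. i < length xs \<longrightarrow> j < length xs \<longrightarrow> i \<noteq> j \<longrightarrow> ?D i j"
      and "i < j" "j < length xs"
    then show "?D i j" by simp
  next
    fix i j
    assume D: "\<forall>i j. i < j \<longrightarrow> j < length xs \<longrightarrow> ?D i j"
      and "i < length xs" "j < length xs" "i \<noteq> j"
    then consider "i < j" | "j < i" by linarith
    then show "?D i j"
      using D \<open>i < length xs\<close> \<open>j < length xs\<close> by cases (auto simp: Int_commute)
  qed
  then show ?thesis unfolding decomposable.simps sorted_wrt_iff_nth_less by simp
qed

lemma decomposable_And_Cons:
  "decomposable (And (b # bs)) \<longleftrightarrow>
     decomposable b \<and> decomposable (And bs) \<and> vars b \<inter> vars (And bs) = {}"
  unfolding decomposable_And by auto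

(* Never hand smooth (Or xs) to the simplifier: its conjunct vars a = vars c is a looping
   rewrite rule. *)
lemma smooth_OrD:
  assumes "smooth (Or xs)" "b \<in> set xs"
  shows "smooth b" "vars b = vars (Or xs)"
proof -
  show "smooth b" using assms by simp
  have same: "\<forall>a\<in>set xs. \<forall>c\<in>set xs. vars a = vars c"
    using assms(1) unfolding smooth.simps by (rule conjunct2)
  show "vars b = vars (Or xs)"
  proof
    show "vars b \<subseteq> vars (Or xs)" using assms(2) by auto
    show "vars (Or xs) \<subseteq> vars b"
    proof
      fix x assume "x \<in> vars (Or xs)"
      then obtain c where "c \<in> set xs" "x \<in> vars c" by auto
      then show "x \<in> vars b" using same assms(2) by metis
    qed
  qed
qed

lemma sat_cong: "(\<And>x. x \<in> vars \<beta> \<Longrightarrow> w x = w' x) \<Longrightarrow> sat w \<beta> = sat w' \<beta>"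
  by (induction \<beta>) auto

lemma kval_And_Cons: "kval I h k (And (b # bs)) = kval I h k b + kval I h k (And bs)"
  by simp

lemma kval_Or_le: "b \<in> set xs \<Longrightarrow> kval I h k (Or xs) \<le> kval I h k b"
  by (simp add: Min_le)

lemma kval_Or_attained:
  assumes "xs \<noteq> []"
  shows "\<exists>b\<in>set xs. kval I h k b = kval I h k (Or xs)"
proof -
  obtain b where b: "b \<in> set xs" using assms by (cases xs) auto
  have "kval I h k (Or xs) \<in> insert \<infinity> (kval I h k ` set xs)"
    unfolding kval.simps set_map by (rule Min_in) simp_all
  then consider "kval I h k (Or xs) = \<infinity>" | "kval I h k (Or xs) \<in> kval I h k ` set xs"
    by (rule insertE)
  then show ?thesis
  proof cases
    case 1
    then have "kval I h k b = kval I h k (Or xs)"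
      using kval_Or_le[OF b, of I h k] by (metis antisym enat_ord_code(3))
    then show ?thesis using b by blast
  qed force
qed

lemma vars_minf_subset: "vars (minf I h k \<beta>) \<subseteq> vars \<beta>"
  by (induction I h k \<beta> rule: minf.induct) (auto simp del: kval.simps)

lemma decomposable_minf: "decomposable \<beta> \<Longrightarrow> decomposable (minf I h k \<beta>)"
proof (induction \<beta> rule: nnf_induct_And_Cons)
  case (And_Cons b bs)
  then show ?case
    using vars_minf_subset[of I h k b] vars_minf_subset[of I h k "And bs"]
    by (auto simp: decomposable_And_Cons simp del: decomposable.simps)
qed (auto simp del: kval.simps)

lemma vars_minf: "smooth \<beta> \<Longrightarrow> vars (minf I h k \<beta>) = vars \<beta>"
proof (induction \<beta> rule: nnf_induct_And_Cons)
  case (Or xs)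
  let ?opt = "filter (\<lambda>b. kval I h k b = kval I h k (Or xs)) xs"
  have vars_opt: "vars (minf I h k b) = vars (Or xs)" if "b \<in> set ?opt" for b
  proof -
    have b: "b \<in> set xs" using that by simp
    show ?thesis
      using Or.IH[OF b smooth_OrD(1)[OF Or.prems b]] smooth_OrD(2)[OF Or.prems b] by (rule trans)
  qed
  show ?case
  proof (cases "xs = []")
    case False
    then have "set ?opt \<noteq> {}"
      using kval_Or_attained[of xs I h k] by auto
    then have "(\<Union>b\<in>set ?opt. vars (minf I h k b)) = vars (Or xs)"
      using vars_opt by (rule SUP_eq_const)
    then show ?thesis by (simp del: kval.simps)
  qed simp
qed auto

lemma smooth_minf: "smooth \<beta> \<Longrightarrow> smooth (minf I h k \<beta>)"
proof (induction \<beta> rule: nnf_induct_And_Cons)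
  case (Or xs)
  have "smooth (minf I h k b) \<and> vars (minf I h k b) = vars (Or xs)" if "b \<in> set xs" for b
    using Or.IH[OF that smooth_OrD(1)[OF Or.prems that]]
      vars_minf[OF smooth_OrD(1)[OF Or.prems that]] smooth_OrD(2)[OF Or.prems that]
    by simp
  then show ?case by (simp del: kval.simps)
qed auto

lemma enat_add_eq_add_iff_le:
  fixes a b :: enat
  assumes "a \<le> enat p" "b \<le> enat q"
  shows "enat (p + q) = a + b \<longleftrightarrow> enat p = a \<and> enat q = b"
  using assms by (cases a; cases b) auto

lemma sum_enat: "(\<Sum>i\<in>A. enat (f i)) = enat (sum f A)"
  by (simp flip: of_nat_eq_enat)

definition cost :: "'i set \<Rightarrow> ('i \<Rightarrow> 'v) \<Rightarrow> ('i \<Rightarrow> nat) \<Rightarrow> 'v set \<Rightarrow> ('v \<Rightarrow> bool) \<Rightarrow> nat" where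
  "cost I h k V w = sum k {i \<in> I. h i \<in> V \<and> \<not> w (h i)}"

lemma cost_empty [simp]: "cost I h k {} w = 0"
  by (simp add: cost_def)

lemma cost_cong: "(\<And>x. x \<in> V \<Longrightarrow> w x = w' x) \<Longrightarrow> cost I h k V w = cost I h k V w'"
  unfolding cost_def by (rule arg_cong[where f = "sum k"]) auto

lemma cost_mono: "finite I \<Longrightarrow> V \<subseteq> V' \<Longrightarrow> cost I h k V w \<le> cost I h k V' w"
  unfolding cost_def by (rule sum_mono2) auto

lemma cost_Un_disjoint:
  "finite I \<Longrightarrow> V \<inter> V' = {} \<Longrightarrow> cost I h k (V \<union> V') w = cost I h k V w + cost I h k V' w"
  unfolding cost_def by (subst sum.union_disjoint[symmetric]) (auto intro: arg_cong[where f="sum k"])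

lemma cost_singleton:
  assumes "inj_on h I"
  shows "enat (cost I h k {x} w) = (if w x then 0 else kval I h k (Neg x))"
proof (cases "\<not> w x \<and> x \<in> h ` I")
  case True
  then obtain i where i: "i \<in> I" "x = h i" by auto
  then have "{j \<in> I. h j \<in> {x} \<and> \<not> w (h j)} = {i}"
    using True assms by (auto simp: inj_on_def)
  then show ?thesis using True i the_inv_into_f_f[OF assms i(1)] by (simp add: cost_def)
next
  case False
  then have empty: "{j \<in> I. h j \<in> {x} \<and> \<not> w (h j)} = {}" by auto
  show ?thesis using False unfolding cost_def empty by (auto simp: zero_enat_def)
qed

lemma KW_eq_cost:
  assumes "h ` I \<subseteq> vars \<alpha>"
  shows "KW \<alpha> I h k w = (if sat w \<alpha> then 0 else \<infinity>) + enat (cost I h k (vars \<alpha>) w)"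
proof -
  have "{i \<in> I. \<not> w (h i)} = {i \<in> I. h i \<in> vars \<alpha> \<and> \<not> w (h i)}" using assms by auto
  then show ?thesis by (simp add: KW_def cost_def sum_enat)
qed

definition min_cost_model ::
    "'i set \<Rightarrow> ('i \<Rightarrow> 'v) \<Rightarrow> ('i \<Rightarrow> nat) \<Rightarrow> 'v nnf \<Rightarrow> ('v \<Rightarrow> bool) \<Rightarrow> bool" where
  "min_cost_model I h k \<beta> w \<longleftrightarrow> sat w \<beta> \<and> enat (cost I h k (vars \<beta>) w) = kval I h k \<beta>"

lemma min_cost_model_cong:
  "(\<And>x. x \<in> vars \<beta> \<Longrightarrow> w x = w' x) \<Longrightarrow>
    min_cost_model I h k \<beta> w = min_cost_model I h k \<beta> w'"
  unfolding min_cost_model_def using sat_cong cost_cong by metis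

context
  fixes I :: "'i set" and h :: "'i \<Rightarrow> 'v" and k :: "'i \<Rightarrow> nat"
  assumes finite_I: "finite I" and inj_h: "inj_on h I"
begin

lemma cost_And_Cons:
  assumes "decomposable (And (b # bs))"
  shows "cost I h k (vars (And (b # bs))) w =
           cost I h k (vars b) w + cost I h k (vars (And bs)) w"
proof -
  have vars_And: "vars (And (b # bs)) = vars b \<union> vars (And bs)" by simp
  have "vars b \<inter> vars (And bs) = {}"
    using assms unfolding decomposable_And_Cons by blast
  then show ?thesis unfolding vars_And by (rule cost_Un_disjoint[OF finite_I])
qed

lemma kval_le_cost:
  "decomposable \<beta> \<Longrightarrow> sat w \<beta> \<Longrightarrow> kval I h k \<beta> \<le> enat (cost I h k (vars \<beta>) w)"
proof (induction \<beta> rule: nnf_induct_And_Cons)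
  case (Neg x)
  then show ?case using cost_singleton[OF inj_h, of k x w] by simp
next
  case (Or xs)
  then obtain b where b: "b \<in> set xs" "sat w b" by auto
  have "kval I h k (Or xs) \<le> kval I h k b" using b(1) by (rule kval_Or_le)
  also have "\<dots> \<le> enat (cost I h k (vars b) w)" using Or.IH Or.prems(1) b by simp
  also have "\<dots> \<le> enat (cost I h k (vars (Or xs)) w)"
    using b(1) by (auto intro: cost_mono[OF finite_I])
  finally show ?case .
next
  case (And_Cons b bs)
  have "decomposable b" "decomposable (And bs)"
    using And_Cons.prems(1) unfolding decomposable_And_Cons by blast+
  moreover have "sat w b" "sat w (And bs)" using And_Cons.prems(2) by simp_all
  ultimately have "kval I h k b + kval I h k (And bs)
      \<le> enat (cost I h k (vars b) w) + enat (cost I h k (vars (And bs)) w)"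
    using And_Cons.IH by (intro add_mono)
  then show ?case
    by (simp only: cost_And_Cons[OF And_Cons.prems(1)] plus_enat_simps(1) kval_And_Cons)
qed auto

lemma min_cost_model_And_Cons_iff:
  assumes "decomposable (And (b # bs))"
  shows "min_cost_model I h k (And (b # bs)) w \<longleftrightarrow>
           min_cost_model I h k b w \<and> min_cost_model I h k (And bs) w"
proof (cases "sat w b \<and> sat w (And bs)")
  case True
  have "decomposable b" "decomposable (And bs)"
    using assms unfolding decomposable_And_Cons by blast+
  with True have "enat (cost I h k (vars b) w + cost I h k (vars (And bs)) w)
        = kval I h k b + kval I h k (And bs) \<longleftrightarrow>
      enat (cost I h k (vars b) w) = kval I h k b \<and>
      enat (cost I h k (vars (And bs)) w) = kval I h k (And bs)"
    by (intro enat_add_eq_add_iff_le kval_le_cost) auto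
  then show ?thesis
    using True unfolding min_cost_model_def cost_And_Cons[OF assms] kval_And_Cons
    by (simp del: kval.simps)
qed (auto simp: min_cost_model_def)

lemma kval_attained:
  "decomposable \<beta> \<Longrightarrow> smooth \<beta> \<Longrightarrow> kval I h k \<beta> \<noteq> \<infinity> \<Longrightarrow> \<exists>w. min_cost_model I h k \<beta> w"
proof (induction \<beta> rule: nnf_induct_And_Cons)
  case TT
  then show ?case by (simp add: min_cost_model_def zero_enat_def)
next
  case (Pos x)
  have "min_cost_model I h k (Pos x) (\<lambda>_. True)"
    using cost_singleton[OF inj_h, of k x "\<lambda>_. True"] by (simp add: min_cost_model_def)
  then show ?case by blast
next
  case (Neg x)
  have "min_cost_model I h k (Neg x) (\<lambda>_. False)"
    using cost_singleton[OF inj_h, of k x "\<lambda>_. False"] by (simp add: min_cost_model_def)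
  then show ?case by blast
next
  case (Or xs)
  then have "xs \<noteq> []" by auto
  then obtain b where b: "b \<in> set xs" "kval I h k b = kval I h k (Or xs)"
    using kval_Or_attained by blast
  have "decomposable b" using Or.prems(1) b(1) by simp
  moreover have "kval I h k b \<noteq> \<infinity>" using b(2) Or.prems(3) by simp
  ultimately obtain w where "min_cost_model I h k b w"
    using Or.IH[OF b(1)] smooth_OrD(1)[OF Or.prems(2) b(1)] by blast
  then have "min_cost_model I h k (Or xs) w"
    using b smooth_OrD(2)[OF Or.prems(2) b(1)]
    by (auto simp: min_cost_model_def simp del: kval.simps)
  then show ?case by blast
next
  case And_Nil
  then show ?case by (simp add: min_cost_model_def zero_enat_def)
next
  case (And_Cons b bs)
  have dec: "decomposable b" "decomposable (And bs)" "vars b \<inter> vars (And bs) = {}"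
    using And_Cons.prems(1) unfolding decomposable_And_Cons by blast+
  have "kval I h k b + kval I h k (And bs) \<noteq> \<infinity>"
    using And_Cons.prems(3) unfolding kval_And_Cons .
  moreover have "smooth b" "smooth (And bs)" using And_Cons.prems(2) by simp_all
  ultimately obtain wb wr
    where wb: "min_cost_model I h k b wb" and wr: "min_cost_model I h k (And bs) wr"
    using And_Cons.IH dec by (metis plus_enat_simps(2,3))
  define w where "w x = (if x \<in> vars b then wb x else wr x)" for x
  have "min_cost_model I h k b w \<longleftrightarrow> min_cost_model I h k b wb"
    by (rule min_cost_model_cong) (simp add: w_def)
  moreover have "min_cost_model I h k (And bs) w \<longleftrightarrow> min_cost_model I h k (And bs) wr"
    using dec(3) by (intro min_cost_model_cong) (auto simp: w_def)
  ultimately show ?case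
    using wb wr min_cost_model_And_Cons_iff[OF And_Cons.prems(1)] by blast
qed auto

lemma sat_minf_iff:
  "decomposable \<beta> \<Longrightarrow> smooth \<beta> \<Longrightarrow> sat w (minf I h k \<beta>) \<longleftrightarrow> min_cost_model I h k \<beta> w"
proof (induction \<beta> rule: nnf_induct_And_Cons)
  case (Pos x)
  then show ?case using cost_singleton[OF inj_h, of k x w] by (auto simp: min_cost_model_def)
next
  case (Neg x)
  then show ?case using cost_singleton[OF inj_h, of k x w] by (auto simp: min_cost_model_def)
next
  case (Or xs)
  have IH: "sat w (minf I h k b) \<longleftrightarrow> min_cost_model I h k b w" if "b \<in> set xs" for b
    using Or.IH[OF that] Or.prems(1) that smooth_OrD(1)[OF Or.prems(2) that] by simp
  have min_Or: "min_cost_model I h k (Or xs) w"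
    if "b \<in> set xs" "kval I h k b = kval I h k (Or xs)" "min_cost_model I h k b w" for b
    using that smooth_OrD(2)[OF Or.prems(2) that(1)]
    by (auto simp: min_cost_model_def simp del: kval.simps)
  show ?case
  proof
    assume "sat w (minf I h k (Or xs))"
    then obtain b where "b \<in> set xs" "kval I h k b = kval I h k (Or xs)" "sat w (minf I h k b)"
      by (auto simp del: kval.simps)
    then show "min_cost_model I h k (Or xs) w" using IH min_Or by blast
  next
    assume min: "min_cost_model I h k (Or xs) w"
    then obtain b where b: "b \<in> set xs" "sat w b" by (auto simp: min_cost_model_def)
    have "kval I h k b \<le> enat (cost I h k (vars b) w)"
      using Or.prems(1) b by (intro kval_le_cost) auto
    also have "\<dots> = kval I h k (Or xs)"
      using min smooth_OrD(2)[OF Or.prems(2) b(1)]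
      by (simp add: min_cost_model_def del: kval.simps)
    finally have kval_b: "kval I h k b = kval I h k (Or xs)"
      using kval_Or_le[OF b(1)] by (rule antisym)
    moreover have "min_cost_model I h k b w"
      using min b(2) smooth_OrD(2)[OF Or.prems(2) b(1)] kval_b
      by (simp add: min_cost_model_def del: kval.simps)
    ultimately show "sat w (minf I h k (Or xs))" using IH b(1) by (auto simp del: kval.simps)
  qed
next
  case (And_Cons b bs)
  have "decomposable b" "decomposable (And bs)"
    using And_Cons.prems(1) unfolding decomposable_And_Cons by blast+
  moreover have "smooth b" "smooth (And bs)" using And_Cons.prems(2) by simp_all
  moreover have "sat w (minf I h k (And (b # bs))) \<longleftrightarrow>
      sat w (minf I h k b) \<and> sat w (minf I h k (And bs))"
    by simp
  ultimately show ?case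
    using And_Cons.IH min_cost_model_And_Cons_iff[OF And_Cons.prems(1)] by blast
qed (auto simp: min_cost_model_def zero_enat_def)

lemma minW_eq_min_cost_models:
  assumes "h ` I \<subseteq> vars \<alpha>" "decomposable \<alpha>" "smooth \<alpha>" "\<exists>w. sat w \<alpha>"
  shows "minW \<alpha> I h k = {w. min_cost_model I h k \<alpha> w}"
proof -
  note KW = KW_eq_cost[OF assms(1), of k]
  have KW_lower: "kval I h k \<alpha> \<le> KW \<alpha> I h k w" for w
    using kval_le_cost[OF assms(2)] by (simp add: KW)
  obtain w0 where "sat w0 \<alpha>" using assms(4) ..
  then have "kval I h k \<alpha> \<le> enat (cost I h k (vars \<alpha>) w0)"
    by (rule kval_le_cost[OF assms(2)])
  then have "kval I h k \<alpha> \<noteq> \<infinity>" by (metis infinity_ileE)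
  then have KW_eq_kval: "KW \<alpha> I h k w = kval I h k \<alpha> \<longleftrightarrow> min_cost_model I h k \<alpha> w" for w
    by (auto simp: KW min_cost_model_def)
  obtain w1 where "min_cost_model I h k \<alpha> w1"
    using kval_attained[OF assms(2,3) \<open>kval I h k \<alpha> \<noteq> \<infinity>\<close>] by blast
  then have KW_w1: "KW \<alpha> I h k w1 = kval I h k \<alpha>" using KW_eq_kval by blast
  have "w \<in> minW \<alpha> I h k \<longleftrightarrow> KW \<alpha> I h k w = kval I h k \<alpha>" for w
  proof
    assume "w \<in> minW \<alpha> I h k"
    then have "KW \<alpha> I h k w \<le> kval I h k \<alpha>" unfolding minW_def KW_w1[symmetric] by blast
    then show "KW \<alpha> I h k w = kval I h k \<alpha>" using KW_lower by (rule antisym)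
  next
    assume "KW \<alpha> I h k w = kval I h k \<alpha>"
    then show "w \<in> minW \<alpha> I h k" unfolding minW_def using KW_lower by simp
  qed
  then show ?thesis using KW_eq_kval by blast
qed

end

theorem proposition4p1:
  fixes \<alpha> :: "'v::finite nnf" and I :: "'i set" and h :: "'i \<Rightarrow> 'v" and k :: "'i \<Rightarrow> nat"
  assumes "finite I"
    and "inj_on h I"
    and "\<forall>i\<in>I. k i > 0"
    and "decomposable \<alpha>" and "smooth \<alpha>"
    and "h ` I \<subseteq> vars \<alpha>"
    and "\<exists>w. sat w \<alpha>"
  shows "decomposable (minf I h k \<alpha>) \<and> smooth (minf I h k \<alpha>)
         \<and> {w. sat w (minf I h k \<alpha>)} = minW \<alpha> I h k"
  using decomposable_minf[OF assms(4)] smooth_minf[OF assms(5)]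
    sat_minf_iff[OF assms(1,2,4,5)] minW_eq_min_cost_models[OF assms(1,2,6,4,5,7)]
  by blast

end
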